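(* Let $P$ be an Eulerian poset of rank $d>0$. Then (i) $B(P;u,1)=(1-u)^d$ and $B(P;1,v)=0$; (ii) the degree of $B(P;u,v)$ with respect to $v$ is less than $d/2$.
   Context: An Eulerian poset is a finite poset with least element $\hat0$, greatest element $\hat1$, all maximal chains of the same length $d$ (the rank), rank function $\rho$, and Möbius function $\mu(x,y)=(-1)^{\rho(y)-\rho(x)}$ for $x\le y$; intervals $[x,y]$ are Eulerian of rank $\rho(y)-\rho(x)$. For Eulerian $Q$ of rank $e$: $G(Q,t)=H(Q,t)=1$ if $e=0$; for $e>0$, $H(Q,t)=\sum_{\hat0<x\le\hat1}(t-1)^{\rho(x)-1}G([x,\hat1],t)$, $G(Q,t)=\tau_{<e/2}((1-t)H(Q,t))$ with $\tau_{<r}(\sum a_it^i)=\sum_{i<r}a_it^i$. $B(Q;u,v)\in\mathbb{Z}[u,v]$ is defined by $B=1$ if $e=0$ and for $e>0$ recursively by $\sum_{\hat0\le x\le\hat1}B([\hat0,x];u,v)u^{e-\rho(x)}G([x,\hat1],u^{-1}v)=G(Q,uv)$. *)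

theory Defs
  imports "HOL-Computational_Algebra.Polynomial"
begin

definition ivl :: "'a rel \<Rightarrow> 'a \<Rightarrow> 'a \<Rightarrow> 'a set" where
  "ivl r x y = {z. (x, z) \<in> r \<and> (z, y) \<in> r}"

definition is_chain :: "'a rel \<Rightarrow> 'a set \<Rightarrow> bool" where
  "is_chain r C \<longleftrightarrow> (\<forall>x\<in>C. \<forall>y\<in>C. (x, y) \<in> r \<or> (y, x) \<in> r)"

definition maximal_chain :: "'a set \<Rightarrow> 'a rel \<Rightarrow> 'a set \<Rightarrow> bool" where
  "maximal_chain P r C \<longleftrightarrow> C \<subseteq> P \<and> is_chain r C \<and>
     (\<forall>D. C \<subseteq> D \<and> D \<subseteq> P \<and> is_chain r D \<longrightarrow> D = C)"

text \<open>Rank of the interval [x,y]: the length of a longest chain in it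
  (equal to the common length of maximal chains for graded posets).\<close>
definition height :: "'a rel \<Rightarrow> 'a \<Rightarrow> 'a \<Rightarrow> nat" where
  "height r x y = Max {card C - 1 | C. C \<subseteq> ivl r x y \<and> is_chain r C}"

definition rho :: "'a rel \<Rightarrow> 'a \<Rightarrow> 'a \<Rightarrow> nat" where
  "rho r zero x = height r zero x"

text \<open>Moebius function via its defining recursion
  mu(x,x) = 1, mu(x,y) = - sum_{x <= z < y} mu(x,z); the first argument is a fuel bound.\<close>
primrec mob_aux :: "nat \<Rightarrow> 'a rel \<Rightarrow> 'a \<Rightarrow> 'a \<Rightarrow> int" where
  "mob_aux 0 r x y = (if x = y then 1 else 0)"
| "mob_aux (Suc n) r x y =
     (if x = y then 1
      else if (x, y) \<in> r then - (\<Sum>z\<in>ivl r x y - {y}. mob_aux n r x z)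
      else 0)"

definition mobius :: "'a set \<Rightarrow> 'a rel \<Rightarrow> 'a \<Rightarrow> 'a \<Rightarrow> int" where
  "mobius P r x y = mob_aux (card P) r x y"

definition eulerian :: "'a set \<Rightarrow> 'a rel \<Rightarrow> 'a \<Rightarrow> 'a \<Rightarrow> nat \<Rightarrow> bool" where
  "eulerian P r zero one d \<longleftrightarrow>
     finite P \<and> partial_order_on P r \<and> zero \<in> P \<and> one \<in> P \<and>
     (\<forall>x\<in>P. (zero, x) \<in> r \<and> (x, one) \<in> r) \<and>
     (\<forall>C. maximal_chain P r C \<longrightarrow> card C = d + 1) \<and>
     (\<forall>x\<in>P. \<forall>y\<in>P. (x, y) \<in> r \<longrightarrow>
        mobius P r x y = (-1) ^ (rho r zero y - rho r zero x))"

definition tau_half :: "nat \<Rightarrow> int poly \<Rightarrow> int poly" where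
  "tau_half e p = (\<Sum>i\<in>{i. 2 * i < e}. monom (coeff p i) i)"

definition Hsum :: "('a \<Rightarrow> 'a \<Rightarrow> int poly) \<Rightarrow> 'a rel \<Rightarrow> 'a \<Rightarrow> 'a \<Rightarrow> int poly" where
  "Hsum g r x y = (\<Sum>z\<in>ivl r x y - {x}. [:-1, 1:] ^ (height r x z - 1) * g z y)"

primrec G_aux :: "nat \<Rightarrow> 'a rel \<Rightarrow> 'a \<Rightarrow> 'a \<Rightarrow> int poly" where
  "G_aux 0 r x y = 1"
| "G_aux (Suc n) r x y =
     (if height r x y = 0 then 1
      else tau_half (height r x y) ([:1, -1:] * Hsum (G_aux n r) r x y))"

definition G_poly :: "'a set \<Rightarrow> 'a rel \<Rightarrow> 'a \<Rightarrow> 'a \<Rightarrow> int poly" where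
  "G_poly P r x y = G_aux (card P) r x y"

definition H_poly :: "'a set \<Rightarrow> 'a rel \<Rightarrow> 'a \<Rightarrow> 'a \<Rightarrow> int poly" where
  "H_poly P r x y = Hsum (G_poly P r) r x y"

text \<open>Bivariate polynomials in Z[u,v] are represented as int poly poly:
  the OUTER variable is v, the coefficients are polynomials in u.\<close>

text \<open>g(uv) as an element of Z[u,v].\<close>
definition at_uv :: "int poly \<Rightarrow> int poly poly" where
  "at_uv g = (\<Sum>i\<le>degree g. monom (monom (coeff g i) i) i)"

text \<open>u^m g(u^{-1} v) as an element of Z[u,v] (only used when degree g <= m).\<close>
definition homog :: "nat \<Rightarrow> int poly \<Rightarrow> int poly poly" where
  "homog m g = (\<Sum>i\<le>degree g. monom (monom (coeff g i) (m - i)) i)"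

text \<open>B of the interval [x,y], obtained by solving the defining recursion
  sum_{x <= z <= y} B([x,z]) u^(e - rho(z)) G([z,y], v/u) = G([x,y], uv) for the term z = y.\<close>
primrec B_aux :: "nat \<Rightarrow> 'a set \<Rightarrow> 'a rel \<Rightarrow> 'a \<Rightarrow> 'a \<Rightarrow> int poly poly" where
  "B_aux 0 P r x y = 1"
| "B_aux (Suc n) P r x y =
     (if height r x y = 0 then 1
      else at_uv (G_poly P r x y)
        - (\<Sum>z\<in>ivl r x y - {y}.
             B_aux n P r x z * homog (height r x y - height r x z) (G_poly P r z y)))"

definition B_poly :: "'a set \<Rightarrow> 'a rel \<Rightarrow> 'a \<Rightarrow> 'a \<Rightarrow> int poly poly" where
  "B_poly P r x y = B_aux (card P) P r x y"

end

theory Submission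
  imports Defs
begin

text \<open>Write \<open>t - 1\<close> and \<open>1 - t\<close> for \<^term>\<open>[:-1, 1:]\<close> and \<^term>\<open>[:1, -1:]\<close>, and
  \<open>\<rho>(x, y)\<close> for the rank of \<open>[x, y]\<close>. In an Eulerian poset ranks are additive and
  \<open>\<mu>(x, y) = (-1)^\<rho>(x, y)\<close>, so the kernels \<open>(1 - t)^\<rho>\<close> and \<open>(t - 1)^\<rho>\<close> are mutually
  inverse in the incidence algebra. Hence \<open>F(x, y) = \<Sum>\<^sub>z (t - 1)^\<rho>(x, z) G([z, y])\<close>, which
  equals \<open>G + (t - 1) H\<close>, satisfies \<open>\<Sum>\<^sub>z (1 - t)^\<rho>(x, z) F(z, y) = G([x, y])\<close>; by induction
  on the rank, and because \<open>G\<close> is the truncation of \<open>(1 - t) H\<close> below \<open>e/2\<close>, this forces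
  \<open>F(x, y) = t^e G([x, y], 1/t)\<close> with \<open>e = \<rho>(x, y)\<close>.
  Setting \<open>v = 1\<close> turns \<open>u^(e - \<rho>(z)) G([z, y], v/u)\<close> into \<open>F(z, y)\<close>, so \<open>B([x, y]; u, 1)\<close>
  solves the same triangular system as \<open>(1 - u)^\<rho>(x, y)\<close>. Setting \<open>u = 1\<close> gives
  \<open>\<Sum>\<^sub>z B([x, z]; 1, v) G([z, y], v) = G([x, y], v)\<close>, solved by \<open>B = 0\<close> for \<open>x < y\<close>.
  The degree bound follows by induction from \<open>deg G([z, y]) < \<rho>(z, y)/2\<close>.\<close>

section \<open>Reversal and truncation of polynomials\<close>

text \<open>\<^term>\<open>reverse_at m p\<close> is \<open>t^m p(1/t)\<close> when \<open>deg p \<le> m\<close>; coefficients of \<open>p\<close> above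
  degree \<open>m\<close> are dropped.\<close>

definition reverse_at :: "nat \<Rightarrow> 'a::comm_ring_1 poly \<Rightarrow> 'a poly" where
  "reverse_at m p = (\<Sum>i\<le>m. monom (coeff p (m - i)) i)"

lemma coeff_reverse_at: "coeff (reverse_at m p) j = (if j \<le> m then coeff p (m - j) else 0)"
  unfolding reverse_at_def by (simp add: coeff_sum)

lemma reverse_at_0_right [simp]: "reverse_at m 0 = 0"
  by (rule poly_eqI) (simp add: coeff_reverse_at)

lemma reverse_at_0_1 [simp]: "reverse_at 0 1 = 1"
  by (rule poly_eqI) (simp add: coeff_reverse_at)

lemma reverse_at_add: "reverse_at m (p + q) = reverse_at m p + reverse_at m q"
  by (rule poly_eqI) (simp add: coeff_reverse_at)

lemma reverse_at_sum: "reverse_at m (\<Sum>z\<in>A. f z) = (\<Sum>z\<in>A. reverse_at m (f z))"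
  by (induction A rule: infinite_finite_induct) (simp_all add: reverse_at_add)

lemma reverse_at_eq_reflect_poly:
  assumes "degree p \<le> m"
  shows "reverse_at m p = monom 1 (m - degree p) * reflect_poly p"
proof (rule poly_eqI)
  fix j
  show "coeff (reverse_at m p) j = coeff (monom 1 (m - degree p) * reflect_poly p) j"
    using assms
    by (cases "j < m - degree p") (auto simp: coeff_reverse_at coeff_monom_mult
        coeff_reflect_poly coeff_eq_0 Suc_diff_le)
qed

lemma reverse_at_mult:
  fixes p q :: "'a::idom poly"
  assumes "degree p \<le> m" "degree q \<le> n"
  shows "reverse_at (m + n) (p * q) = reverse_at m p * reverse_at n q"
proof (cases "p = 0 \<or> q = 0")
  case False
  then have "degree (p * q) = degree p + degree q" by (simp add: degree_mult_eq)
  then have "monom 1 (m + n - degree (p * q)) = monom 1 (m - degree p) * (monom 1 (n - degree q) :: 'a poly)"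
    using assms by (simp add: mult_monom)
  moreover have "degree (p * q) \<le> m + n"
    using assms degree_mult_le[of p q] by linarith
  ultimately show ?thesis
    using assms by (simp add: reverse_at_eq_reflect_poly reflect_poly_mult ac_simps)
qed auto

lemma reverse_at_t_minus_1_power:
  "reverse_at n ([:-1, 1:] ^ n) = ([:1, -1:] ^ n :: 'a::idom poly)"
proof -
  have "reflect_poly [:-1, 1::'a:] = [:1, -1:]"
    using reflect_poly_pCons'[of "[:1::'a:]" "-1"] by (simp add: monom_Suc monom_0)
  then show ?thesis
    by (simp add: reverse_at_eq_reflect_poly degree_power_eq reflect_poly_power)
qed

lemma one_minus_t_power: "[:1, -1:] ^ n = smult ((-1) ^ n) ([:-1, 1:] ^ n :: 'a::comm_ring_1 poly)"
  using smult_power[of "-1" "[:-1, 1:] :: 'a poly" n] by simp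

lemma coeff_tau_half: "coeff (tau_half e p) j = (if 2 * j < e then coeff p j else 0)"
proof -
  have "finite {i. 2 * i < e}" by (rule finite_subset[of _ "{..e}"]) auto
  then show ?thesis unfolding tau_half_def coeff_sum by simp
qed

lemma degree_tau_half: "0 < e \<Longrightarrow> 2 * degree (tau_half e p) < e"
proof -
  assume "0 < e"
  have "degree (tau_half e p) \<le> (e - 1) div 2"
    by (rule degree_le) (auto simp: coeff_tau_half)
  with \<open>0 < e\<close> show ?thesis by linarith
qed

lemma reverse_at_tau_half:
  assumes D_reverse: "reverse_at e D = - D"
  shows "reverse_at e (tau_half e (- D)) = tau_half e (- D) + D"
proof (rule poly_eqI)
  fix j
  have D_coeff: "coeff D i = (if i \<le> e then - coeff D (e - i) else 0)" for i
    using arg_cong[OF D_reverse, of "\<lambda>p. coeff p i"] by (auto simp: coeff_reverse_at)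
  show "coeff (reverse_at e (tau_half e (- D))) j = coeff (tau_half e (- D) + D) j"
  proof (cases "j \<le> e")
    case True
    then consider "2 * j < e" | "2 * j = e" | "e < 2 * j" by linarith
    then show ?thesis
      using True D_coeff[of j] by cases (auto simp: coeff_reverse_at coeff_tau_half)
  qed (use D_coeff[of j] in \<open>simp add: coeff_reverse_at coeff_tau_half\<close>)
qed

text \<open>For \<open>B \<in> \<int>[u, v]\<close> encoded with outer variable \<open>v\<close>, \<^term>\<open>poly B 1\<close> sets \<open>v = 1\<close> and
  \<^term>\<open>eval_inner 1 B\<close> sets \<open>u = 1\<close>.\<close>
definition eval_inner :: "'a::comm_ring_1 \<Rightarrow> 'a poly poly \<Rightarrow> 'a poly" where
  "eval_inner a p = map_poly (\<lambda>c. poly c a) p"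

lemma coeff_eval_inner: "coeff (eval_inner a p) n = poly (coeff p n) a"
  unfolding eval_inner_def by (simp add: coeff_map_poly)

lemma eval_inner_0 [simp]: "eval_inner a 0 = 0"
  unfolding eval_inner_def by simp

lemma eval_inner_1 [simp]: "eval_inner a 1 = 1"
  unfolding eval_inner_def by simp

lemma eval_inner_add: "eval_inner a (p + q) = eval_inner a p + eval_inner a q"
  by (rule poly_eqI) (simp add: coeff_eval_inner)

lemma eval_inner_diff: "eval_inner a (p - q) = eval_inner a p - eval_inner a q"
  by (rule poly_eqI) (simp add: coeff_eval_inner)

lemma eval_inner_mult: "eval_inner a (p * q) = eval_inner a p * eval_inner a q"
  by (rule poly_eqI) (simp add: coeff_eval_inner coeff_mult poly_sum)

lemma eval_inner_sum: "eval_inner a (\<Sum>z\<in>A. f z) = (\<Sum>z\<in>A. eval_inner a (f z))"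
  by (induction A rule: infinite_finite_induct) (simp_all add: eval_inner_add)

lemma eval_inner_monom: "eval_inner a (monom (monom c i) j) = monom (c * a ^ i) j"
  by (rule poly_eqI) (simp add: coeff_eval_inner poly_monom)

lemma eval_inner_1_at_uv: "eval_inner 1 (at_uv g) = g"
  unfolding at_uv_def by (simp add: eval_inner_sum eval_inner_monom poly_as_sum_of_monoms)

lemma eval_inner_1_homog: "eval_inner 1 (homog m g) = g"
  unfolding homog_def by (simp add: eval_inner_sum eval_inner_monom poly_as_sum_of_monoms)

lemma poly_at_uv_1: "poly (at_uv g) 1 = g"
  unfolding at_uv_def by (simp add: poly_sum poly_monom poly_as_sum_of_monoms)

lemma poly_homog_1:
  assumes "degree g \<le> m"
  shows "poly (homog m g) 1 = reverse_at m g"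
proof -
  have "poly (homog m g) 1 = (\<Sum>i\<le>degree g. monom (coeff g i) (m - i))"
    unfolding homog_def by (simp add: poly_sum poly_monom)
  also have "\<dots> = (\<Sum>i\<le>m. monom (coeff g i) (m - i))"
    by (rule sum.mono_neutral_left) (use assms in \<open>auto simp: coeff_eq_0\<close>)
  also have "\<dots> = reverse_at m g"
    unfolding reverse_at_def
    using sum.atLeastAtMost_rev[of "\<lambda>i. monom (coeff g (m - i)) i" 0 m]
    by (simp add: atLeast0AtMost)
  finally show ?thesis .
qed

lemma degree_at_uv: "degree (at_uv g) \<le> degree g"
  unfolding at_uv_def by (rule degree_sum_le) (auto intro: order_trans[OF degree_monom_le])

lemma degree_homog: "degree (homog m g) \<le> degree g"
  unfolding homog_def by (rule degree_sum_le) (auto intro: order_trans[OF degree_monom_le])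

section \<open>Heights in finite posets\<close>

lemma mem_ivl_iff: "z \<in> ivl r x y \<longleftrightarrow> (x, z) \<in> r \<and> (z, y) \<in> r"
  unfolding ivl_def by simp

lemma is_chain_subset: "is_chain r D \<Longrightarrow> C \<subseteq> D \<Longrightarrow> is_chain r C"
  unfolding is_chain_def by blast

lemma is_chain_Un:
  assumes "is_chain r A" "is_chain r B" "\<And>a b. a \<in> A \<Longrightarrow> b \<in> B \<Longrightarrow> (a, b) \<in> r"
  shows "is_chain r (A \<union> B)"
  using assms unfolding is_chain_def by blast

locale finite_poset =
  fixes P :: "'a set" and r :: "'a rel"
  assumes finite_carrier: "finite P" and partial_order: "partial_order_on P r"
begin

lemma rel_carrier: "(x, y) \<in> r \<Longrightarrow> x \<in> P \<and> y \<in> P"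
  using partial_order unfolding partial_order_on_def preorder_on_def by blast

lemma rel_refl: "x \<in> P \<Longrightarrow> (x, x) \<in> r"
  using partial_order unfolding partial_order_on_def preorder_on_def refl_on_def by blast

lemma rel_trans: "(x, y) \<in> r \<Longrightarrow> (y, z) \<in> r \<Longrightarrow> (x, z) \<in> r"
  using partial_order unfolding partial_order_on_def preorder_on_def trans_def by blast

lemma rel_antisym: "(x, y) \<in> r \<Longrightarrow> (y, x) \<in> r \<Longrightarrow> x = y"
  using partial_order unfolding partial_order_on_def antisym_def by blast

lemma ivl_subset_carrier: "ivl r x y \<subseteq> P"
  unfolding ivl_def using rel_carrier by blast

lemma finite_ivl: "finite (ivl r x y)"
  using ivl_subset_carrier finite_carrier by (rule finite_subset)

lemma left_mem_ivl: "(x, y) \<in> r \<Longrightarrow> x \<in> ivl r x y"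
  using rel_carrier rel_refl by (simp add: mem_ivl_iff)

lemma right_mem_ivl: "(x, y) \<in> r \<Longrightarrow> y \<in> ivl r x y"
  using rel_carrier rel_refl by (simp add: mem_ivl_iff)

lemma ivl_same: "x \<in> P \<Longrightarrow> ivl r x x = {x}"
  using rel_antisym rel_refl by (auto simp: mem_ivl_iff)

lemma finite_chain_lengths: "finite {card C - 1 | C. C \<subseteq> ivl r x y \<and> is_chain r C}"
proof -
  have "finite {C. C \<subseteq> ivl r x y \<and> is_chain r C}"
    by (rule finite_subset[of _ "Pow (ivl r x y)"]) (auto simp: finite_ivl)
  then show ?thesis
    by (simp add: setcompr_eq_image)
qed

lemma chain_card_le_height: "C \<subseteq> ivl r x y \<Longrightarrow> is_chain r C \<Longrightarrow> card C - 1 \<le> height r x y"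
  unfolding height_def by (rule Max_ge[OF finite_chain_lengths]) blast

lemma obtain_longest_chain:
  obtains C where "C \<subseteq> ivl r x y" "is_chain r C" "card C - 1 = height r x y"
proof -
  have "{card C - 1 | C. C \<subseteq> ivl r x y \<and> is_chain r C} \<noteq> {}"
    by (auto simp: is_chain_def)
  then have "height r x y \<in> {card C - 1 | C. C \<subseteq> ivl r x y \<and> is_chain r C}"
    unfolding height_def by (rule Max_in[OF finite_chain_lengths])
  then obtain C where "height r x y = card C - 1" "C \<subseteq> ivl r x y" "is_chain r C"
    by blast
  then show ?thesis using that by simp
qed

lemma obtain_longest_chain_with_ends:
  assumes "(x, y) \<in> r"
  obtains C where "C \<subseteq> ivl r x y" "is_chain r C" "x \<in> C" "y \<in> C" "card C = height r x y + 1"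
proof -
  obtain C where C: "C \<subseteq> ivl r x y" "is_chain r C" "card C - 1 = height r x y"
    by (rule obtain_longest_chain)
  define D where "D = insert x (insert y C)"
  have D_sub: "D \<subseteq> ivl r x y"
    using C(1) left_mem_ivl[OF assms] right_mem_ivl[OF assms] unfolding D_def by blast
  have "is_chain r D"
    using C(2) D_sub unfolding is_chain_def D_def by (auto simp: mem_ivl_iff)
  moreover have "finite D" using D_sub finite_ivl by (rule finite_subset)
  then have "card C \<le> card D" "card D \<noteq> 0" unfolding D_def by (auto intro: card_mono)
  moreover have "card D - 1 \<le> height r x y"
    using D_sub \<open>is_chain r D\<close> by (rule chain_card_le_height)
  ultimately have "card D = height r x y + 1" using C(3) by linarith
  then show ?thesis
    using that D_sub \<open>is_chain r D\<close> unfolding D_def by blast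
qed

lemma height_superadditive:
  assumes xz: "(x, z) \<in> r" and zy: "(z, y) \<in> r"
  shows "height r x z + height r z y \<le> height r x y"
proof -
  obtain C1 where C1: "C1 \<subseteq> ivl r x z" "is_chain r C1" "z \<in> C1" "card C1 = height r x z + 1"
    using xz by (rule obtain_longest_chain_with_ends)
  obtain C2 where C2: "C2 \<subseteq> ivl r z y" "is_chain r C2" "z \<in> C2" "card C2 = height r z y + 1"
    using zy by (rule obtain_longest_chain_with_ends)
  have below: "(a, z) \<in> r" if "a \<in> C1" for a using that C1(1) by (auto simp: mem_ivl_iff)
  have above: "(z, b) \<in> r" if "b \<in> C2" for b using that C2(1) by (auto simp: mem_ivl_iff)
  have sub: "C1 \<union> C2 \<subseteq> ivl r x y"
    using C1(1) C2(1) xz zy rel_trans unfolding mem_ivl_iff subset_iff by (metis Un_iff)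
  have chain: "is_chain r (C1 \<union> C2)"
    using C1(2) C2(2) by (rule is_chain_Un) (use below above rel_trans in blast)
  have "C1 \<inter> C2 = {z}"
    using C1(3) C2(3) below above rel_antisym by blast
  moreover have "finite C1" "finite C2"
    using C1(1) C2(1) finite_ivl finite_subset by blast+
  ultimately have "card (C1 \<union> C2) = height r x z + height r z y + 1"
    using card_Un_Int[of C1 C2] C1(4) C2(4) by simp
  then show ?thesis
    using chain_card_le_height[OF sub chain] by simp
qed

lemma height_same: "height r x x = 0"
proof -
  obtain C where C: "C \<subseteq> ivl r x x" "card C - 1 = height r x x"
    by (rule obtain_longest_chain)
  have "ivl r x x \<subseteq> {x}" using rel_antisym by (auto simp: mem_ivl_iff)
  then have "card C \<le> 1" using C(1) card_mono[of "{x}" C] by auto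
  then show ?thesis using C by simp
qed

lemma height_pos: "(x, y) \<in> r \<Longrightarrow> x \<noteq> y \<Longrightarrow> 0 < height r x y"
  using chain_card_le_height[of "{x, y}" x y] left_mem_ivl right_mem_ivl rel_carrier rel_refl
  by (force simp: is_chain_def)

lemma height_eq_0_iff: "(x, y) \<in> r \<Longrightarrow> height r x y = 0 \<longleftrightarrow> x = y"
  using height_pos height_same by fastforce

lemma height_less_left:
  "(x, z) \<in> r \<Longrightarrow> (z, y) \<in> r \<Longrightarrow> z \<noteq> x \<Longrightarrow> height r z y < height r x y"
  using height_superadditive height_pos by fastforce

lemma height_less_right:
  "(x, z) \<in> r \<Longrightarrow> (z, y) \<in> r \<Longrightarrow> z \<noteq> y \<Longrightarrow> height r x z < height r x y"
  using height_superadditive height_pos by fastforce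

lemma card_chain_inter_ivl_le: "is_chain r D \<Longrightarrow> card (D \<inter> ivl r x y) \<le> height r x y + 1"
  using chain_card_le_height[of "D \<inter> ivl r x y" x y] is_chain_subset[of r D] by fastforce

lemma height_le_card: "height r x y \<le> card P - 1"
proof -
  obtain C where C: "C \<subseteq> ivl r x y" "card C - 1 = height r x y"
    by (rule obtain_longest_chain)
  have "card C \<le> card P"
    using C(1) ivl_subset_carrier finite_carrier by (meson card_mono order_trans)
  then show ?thesis using C by simp
qed

lemma height_induct [consumes 1, case_names less]:
  assumes "(x, y) \<in> r"
    and "\<And>x y. (x, y) \<in> r \<Longrightarrow>
           (\<And>x' y'. (x', y') \<in> r \<Longrightarrow> height r x' y' < height r x y \<Longrightarrow> Q x' y') \<Longrightarrow> Q x y"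
  shows "Q x y"
  using assms by (induction "height r x y" arbitrary: x y rule: less_induct) blast

lemma obtain_card_Suc:
  assumes "(x, y) \<in> r"
  obtains k where "card P = Suc k"
  using rel_carrier[OF assms] finite_carrier card_gt_0_iff[of P] not0_implies_Suc by blast

lemma fuel_irrelevant:
  fixes f :: "nat \<Rightarrow> 'a \<Rightarrow> 'a \<Rightarrow> 'b"
  assumes base: "\<And>n x y. (x, y) \<in> r \<Longrightarrow> height r x y = 0 \<Longrightarrow> f (Suc n) x y = f 0 x y"
    and step: "\<And>n m x y. (x, y) \<in> r \<Longrightarrow>
      (\<And>x' y'. (x', y') \<in> r \<Longrightarrow> height r x' y' < height r x y \<Longrightarrow> f n x' y' = f m x' y') \<Longrightarrow>
      f (Suc n) x y = f (Suc m) x y"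
    and xy: "(x, y) \<in> r" and card: "card P = Suc k"
  shows "f k x y = f (card P) x y"
proof -
  have stable: "f n x y = f m x y" if "height r x y \<le> n" "height r x y \<le> m" for n m
    using xy that
  proof (induction arbitrary: n m rule: height_induct)
    case (less x y)
    show ?case
    proof (cases "height r x y = 0")
      case True
      then show ?thesis using base[OF less.hyps] by (cases n; cases m) simp_all
    next
      case False
      then obtain n' m' where n: "n = Suc n'" and m: "m = Suc m'"
        using less.prems by (cases n; cases m) auto
      have "f (Suc n') x y = f (Suc m') x y"
        using less.prems less.IH unfolding n m by (intro step[OF less.hyps]) auto
      then show ?thesis unfolding n m .
    qed
  qed
  show ?thesis
    using height_le_card[of x y] card by (intro stable) simp_all
qed

lemma G_aux_fuel: "(x, y) \<in> r \<Longrightarrow> card P = Suc k \<Longrightarrow> G_aux k r x y = G_aux (card P) r x y"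
proof (rule fuel_irrelevant)
  fix n m x y
  assume xy: "(x, y) \<in> r"
    and IH: "\<And>x' y'. (x', y') \<in> r \<Longrightarrow> height r x' y' < height r x y \<Longrightarrow> G_aux n r x' y' = G_aux m r x' y'"
  have "Hsum (G_aux n r) r x y = Hsum (G_aux m r) r x y"
    unfolding Hsum_def
    by (rule sum.cong) (auto simp: mem_ivl_iff intro!: IH height_less_left)
  then show "G_aux (Suc n) r x y = G_aux (Suc m) r x y" by simp
qed simp

lemma G_poly_unfold:
  assumes "(x, y) \<in> r"
  shows "G_poly P r x y = (if height r x y = 0 then 1
           else tau_half (height r x y) ([:1, -1:] * H_poly P r x y))"
proof -
  obtain k where k: "card P = Suc k" using assms by (rule obtain_card_Suc)
  have "Hsum (G_aux k r) r x y = H_poly P r x y"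
    unfolding H_poly_def Hsum_def G_poly_def
    by (rule sum.cong) (simp_all add: mem_ivl_iff G_aux_fuel[OF _ k])
  then show ?thesis
    unfolding G_poly_def[of P r x y] k by simp
qed

lemma B_aux_fuel: "(x, y) \<in> r \<Longrightarrow> card P = Suc k \<Longrightarrow> B_aux k P r x y = B_aux (card P) P r x y"
proof (rule fuel_irrelevant)
  fix n m x y
  assume xy: "(x, y) \<in> r"
    and IH: "\<And>x' y'. (x', y') \<in> r \<Longrightarrow> height r x' y' < height r x y \<Longrightarrow> B_aux n P r x' y' = B_aux m P r x' y'"
  have "(\<Sum>z\<in>ivl r x y - {y}. B_aux n P r x z * homog (height r x y - height r x z) (G_poly P r z y))
      = (\<Sum>z\<in>ivl r x y - {y}. B_aux m P r x z * homog (height r x y - height r x z) (G_poly P r z y))"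
    by (rule sum.cong) (auto simp: mem_ivl_iff intro!: IH height_less_right)
  then show "B_aux (Suc n) P r x y = B_aux (Suc m) P r x y" by simp
qed simp

lemma B_poly_unfold:
  assumes "(x, y) \<in> r"
  shows "B_poly P r x y = (if height r x y = 0 then 1
           else at_uv (G_poly P r x y) - (\<Sum>z\<in>ivl r x y - {y}.
             B_poly P r x z * homog (height r x y - height r x z) (G_poly P r z y)))"
proof -
  obtain k where k: "card P = Suc k" using assms by (rule obtain_card_Suc)
  have "(\<Sum>z\<in>ivl r x y - {y}. B_aux k P r x z * homog (height r x y - height r x z) (G_poly P r z y))
      = (\<Sum>z\<in>ivl r x y - {y}. B_poly P r x z * homog (height r x y - height r x z) (G_poly P r z y))"
    unfolding B_poly_def by (rule sum.cong) (simp_all add: mem_ivl_iff B_aux_fuel[OF _ k])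
  then show ?thesis
    unfolding B_poly_def[of P r x y] k by simp
qed

lemma mob_aux_fuel: "(x, y) \<in> r \<Longrightarrow> card P = Suc k \<Longrightarrow> mob_aux k r x y = mob_aux (card P) r x y"
proof (rule fuel_irrelevant)
  fix n m x y
  assume xy: "(x, y) \<in> r"
    and IH: "\<And>x' y'. (x', y') \<in> r \<Longrightarrow> height r x' y' < height r x y \<Longrightarrow> mob_aux n r x' y' = mob_aux m r x' y'"
  have "(\<Sum>z\<in>ivl r x y - {y}. mob_aux n r x z) = (\<Sum>z\<in>ivl r x y - {y}. mob_aux m r x z)"
    by (rule sum.cong) (auto simp: mem_ivl_iff intro!: IH height_less_right)
  then show "mob_aux (Suc n) r x y = mob_aux (Suc m) r x y" by simp
qed (simp add: height_eq_0_iff)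

lemma mobius_unfold:
  assumes "(x, y) \<in> r" "x \<noteq> y"
  shows "mobius P r x y = - (\<Sum>z\<in>ivl r x y - {y}. mobius P r x z)"
proof -
  obtain k where k: "card P = Suc k" using assms(1) by (rule obtain_card_Suc)
  have "(\<Sum>z\<in>ivl r x y - {y}. mob_aux k r x z) = (\<Sum>z\<in>ivl r x y - {y}. mobius P r x z)"
    unfolding mobius_def by (rule sum.cong) (simp_all add: mem_ivl_iff mob_aux_fuel[OF _ k])
  then show ?thesis
    unfolding mobius_def[of P r x y] k using assms by simp
qed

lemma G_poly_same: "x \<in> P \<Longrightarrow> G_poly P r x x = 1"
  using G_poly_unfold rel_refl height_same by simp

lemma B_poly_same: "x \<in> P \<Longrightarrow> B_poly P r x x = 1"
  using B_poly_unfold rel_refl height_same by simp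

lemma degree_G_poly: "(x, y) \<in> r \<Longrightarrow> x \<noteq> y \<Longrightarrow> 2 * degree (G_poly P r x y) < height r x y"
  using G_poly_unfold degree_tau_half height_pos by simp

lemma degree_G_poly_le: "(x, y) \<in> r \<Longrightarrow> degree (G_poly P r x y) \<le> height r x y"
  using degree_G_poly[of x y] G_poly_same rel_carrier by (cases "x = y") fastforce+

lemma one_minus_t_times_H_poly:
  "[:1, -1:] * H_poly P r x y = - (\<Sum>z\<in>ivl r x y - {x}. [:-1, 1:] ^ height r x z * G_poly P r z y)"
proof -
  have "[:1, -1:] * [:-1, 1:] ^ (height r x z - 1) = - ([:-1, 1:] ^ height r x z :: int poly)"
    if "z \<in> ivl r x y - {x}" for z
  proof -
    have "0 < height r x z" using that height_pos by (auto simp: mem_ivl_iff)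
    then show ?thesis by (cases "height r x z") simp_all
  qed
  then show ?thesis
    unfolding H_poly_def Hsum_def sum_distrib_left sum_negf[symmetric] mult.assoc[symmetric]
    by (intro sum.cong) simp_all
qed

end

section \<open>Eulerian posets\<close>

locale eulerian_poset = finite_poset P r for P :: "'a set" and r +
  fixes zero one :: 'a and d :: nat
  assumes zero_in_carrier: "zero \<in> P" and one_in_carrier: "one \<in> P"
    and bounded: "\<And>x. x \<in> P \<Longrightarrow> (zero, x) \<in> r \<and> (x, one) \<in> r"
    and card_maximal_chain: "\<And>C. maximal_chain P r C \<Longrightarrow> card C = d + 1"
    and mobius_eq: "\<And>x y. x \<in> P \<Longrightarrow> y \<in> P \<Longrightarrow> (x, y) \<in> r \<Longrightarrow>
           mobius P r x y = (-1) ^ (rho r zero y - rho r zero x)"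

lemma eulerian_poset_if_eulerian:
  "eulerian P r zero one d \<Longrightarrow> eulerian_poset P r zero one d"
  unfolding eulerian_def by unfold_locales blast+

context eulerian_poset
begin

lemma extend_to_maximal_chain:
  assumes "C \<subseteq> P" "is_chain r C"
  obtains D where "maximal_chain P r D" "C \<subseteq> D"
proof -
  define S where "S = {D. C \<subseteq> D \<and> D \<subseteq> P \<and> is_chain r D}"
  have "finite S" unfolding S_def
    by (rule finite_subset[of _ "Pow P"]) (auto simp: finite_carrier)
  moreover have "C \<in> S" using assms unfolding S_def by simp
  ultimately have "Max (card ` S) \<in> card ` S" by (intro Max_in) auto
  then obtain D where D_Max: "Max (card ` S) = card D" and D: "D \<in> S" by (rule imageE)
  have D_max: "card D' \<le> card D" if "D' \<in> S" for D'
    using D_Max \<open>finite S\<close> that by (metis Max_ge finite_imageI imageI)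
  have "maximal_chain P r D"
    unfolding maximal_chain_def
  proof (intro conjI allI impI)
    fix D' assume D': "D \<subseteq> D' \<and> D' \<subseteq> P \<and> is_chain r D'"
    then have "D' \<in> S" using D unfolding S_def by auto
    moreover have "finite D'" using D' finite_carrier finite_subset by blast
    ultimately show "D' = D" using D' D_max card_seteq by blast
  qed (use D in \<open>auto simp: S_def\<close>)
  then show ?thesis using that D unfolding S_def by blast
qed

lemma zero_rel: "x \<in> P \<Longrightarrow> (zero, x) \<in> r"
  using bounded by blast

lemma rel_one: "x \<in> P \<Longrightarrow> (x, one) \<in> r"
  using bounded by blast

lemma height_zero_one_le: "height r zero one \<le> d"
proof -
  obtain C where C: "C \<subseteq> ivl r zero one" "is_chain r C" "card C - 1 = height r zero one"
    by (rule obtain_longest_chain)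
  obtain D where D: "maximal_chain P r D" "C \<subseteq> D"
    using C(1,2) ivl_subset_carrier by (meson extend_to_maximal_chain order_trans)
  have "finite D" using D(1) finite_carrier finite_subset unfolding maximal_chain_def by blast
  then have "card C \<le> card D" using D(2) card_mono by blast
  then show ?thesis using card_maximal_chain[OF D(1)] C(3) by simp
qed

lemma card_chain_through_le:
  assumes D: "is_chain r D" "D \<subseteq> P" and x: "x \<in> D" and z: "z \<in> D" and xz: "(x, z) \<in> r"
  shows "card D \<le> height r zero x + height r x z + height r z one + 1"
proof -
  have xP: "x \<in> P" and zP: "z \<in> P" using rel_carrier xz by auto
  define A1 where "A1 = D \<inter> ivl r zero x"
  define A2 where "A2 = D \<inter> ivl r x z - {x}"
  define A3 where "A3 = D \<inter> ivl r z one - {z}"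
  have "w \<in> A1 \<union> A2 \<union> A3" if "w \<in> D" for w
  proof -
    have "w \<in> P" using that D(2) by blast
    moreover have "(w, x) \<in> r \<or> (x, w) \<in> r" "(w, z) \<in> r \<or> (z, w) \<in> r"
      using D(1) x z that unfolding is_chain_def by auto
    ultimately show ?thesis
      using that zero_rel rel_one rel_refl xP zP unfolding A1_def A2_def A3_def
      by (auto simp: mem_ivl_iff)
  qed
  then have "card D \<le> card (A1 \<union> A2 \<union> A3)"
    unfolding A1_def A2_def A3_def by (intro card_mono) (auto simp: finite_ivl)
  also have "\<dots> \<le> card A1 + card A2 + card A3"
    using card_Un_le[of "A1 \<union> A2" A3] card_Un_le[of A1 A2] by linarith
  finally have "card D \<le> card A1 + card A2 + card A3" .
  moreover have "card A1 \<le> height r zero x + 1"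
    unfolding A1_def using D(1) by (rule card_chain_inter_ivl_le)
  moreover have "card A2 \<le> height r x z"
    using card_chain_inter_ivl_le[OF D(1), of x z] x left_mem_ivl[OF xz] finite_ivl
    unfolding A2_def by (simp add: card_Diff_singleton)
  moreover have "card A3 \<le> height r z one"
    using card_chain_inter_ivl_le[OF D(1), of z one] z left_mem_ivl[OF rel_one[OF zP]] finite_ivl
    unfolding A3_def by (simp add: card_Diff_singleton)
  ultimately show ?thesis by linarith
qed

lemma height_through:
  assumes xz: "(x, z) \<in> r"
  shows "height r zero x + height r x z + height r z one = d"
proof (rule antisym)
  have xP: "x \<in> P" and zP: "z \<in> P" using rel_carrier xz by auto
  show "height r zero x + height r x z + height r z one \<le> d"
    using height_superadditive[OF zero_rel[OF xP] xz] height_zero_one_le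
      height_superadditive[OF zero_rel[OF zP] rel_one[OF zP]] by linarith
  have "is_chain r {x, z}" using xz rel_refl xP zP unfolding is_chain_def by auto
  moreover have "{x, z} \<subseteq> P" using xP zP by simp
  ultimately obtain D where D: "maximal_chain P r D" "{x, z} \<subseteq> D"
    using extend_to_maximal_chain by blast
  then have "card D \<le> height r zero x + height r x z + height r z one + 1"
    using xz by (intro card_chain_through_le) (auto simp: maximal_chain_def)
  then show "d \<le> height r zero x + height r x z + height r z one"
    using card_maximal_chain[OF D(1)] by linarith
qed

lemma height_additive:
  assumes "(x, z) \<in> r" "(z, y) \<in> r"
  shows "height r x z + height r z y = height r x y"
proof -
  have from_zero: "height r zero a + height r a b = height r zero b" if "(a, b) \<in> r" for a b
    using height_through[OF that] height_through[OF zero_rel, of b] rel_carrier[OF that] height_same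
    by simp
  show ?thesis
    using from_zero[OF assms(1)] from_zero[OF assms(2)] from_zero[OF rel_trans[OF assms]] by linarith
qed

lemma mobius_eq_power: "(x, y) \<in> r \<Longrightarrow> mobius P r x y = (-1) ^ height r x y"
  using mobius_eq[of x y] rel_carrier height_additive[OF zero_rel] unfolding rho_def
  by (metis add_diff_cancel_left')

lemma sum_sign_height:
  assumes "(x, y) \<in> r" "x \<noteq> y"
  shows "(\<Sum>z\<in>ivl r x y. (-1::int) ^ height r x z) = 0"
proof -
  have "(\<Sum>z\<in>ivl r x y. (-1::int) ^ height r x z) = (\<Sum>z\<in>ivl r x y. mobius P r x z)"
    by (rule sum.cong) (simp_all add: mobius_eq_power mem_ivl_iff)
  also have "\<dots> = mobius P r x y + (\<Sum>z\<in>ivl r x y - {y}. mobius P r x z)"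
    using sum.remove[OF finite_ivl right_mem_ivl[OF assms(1)]] by simp
  also have "\<dots> = 0" using mobius_unfold[OF assms] by simp
  finally show ?thesis .
qed

lemma one_minus_t_t_minus_one_inverse:
  assumes "(x, y) \<in> r"
  shows "(\<Sum>z\<in>ivl r x y. [:1, -1:] ^ height r x z * [:-1, 1:] ^ height r z y :: int poly)
         = (if x = y then 1 else 0)"
proof (cases "x = y")
  case True
  then show ?thesis using assms rel_carrier ivl_same height_same by simp
next
  case False
  have "[:1, -1:] ^ height r x z * [:-1, 1:] ^ height r z y
        = smult ((-1) ^ height r x z) ([:-1, 1:] ^ height r x y :: int poly)"
    if "z \<in> ivl r x y" for z
  proof -
    have "height r x z + height r z y = height r x y"
      using height_additive that by (simp add: mem_ivl_iff)
    then show ?thesis by (simp add: one_minus_t_power power_add[symmetric])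
  qed
  then have "(\<Sum>z\<in>ivl r x y. [:1, -1:] ^ height r x z * [:-1, 1:] ^ height r z y :: int poly)
             = smult (\<Sum>z\<in>ivl r x y. (-1) ^ height r x z) ([:-1, 1:] ^ height r x y)"
    by (simp add: smult_sum)
  then show ?thesis using sum_sign_height[OF assms False] False by simp
qed

section \<open>The polynomials \<open>F\<close>, \<open>G\<close> and \<open>B\<close>\<close>

definition F_poly :: "'a \<Rightarrow> 'a \<Rightarrow> int poly" where
  "F_poly x y = (\<Sum>z\<in>ivl r x y. [:-1, 1:] ^ height r x z * G_poly P r z y)"

lemma F_poly_same: "x \<in> P \<Longrightarrow> F_poly x x = 1"
  unfolding F_poly_def using ivl_same height_same G_poly_same by simp

lemma F_poly_split:
  assumes "(x, y) \<in> r"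
  shows "F_poly x y = G_poly P r x y + (\<Sum>z\<in>ivl r x y - {x}. [:-1, 1:] ^ height r x z * G_poly P r z y)"
  unfolding F_poly_def sum.remove[OF finite_ivl left_mem_ivl[OF assms]] by (simp add: height_same)

lemma F_poly_inversion:
  assumes xy: "(x, y) \<in> r"
  shows "(\<Sum>z\<in>ivl r x y. [:1, -1:] ^ height r x z * F_poly z y) = G_poly P r x y"
proof -
  let ?I = "ivl r x y"
  let ?K = "\<lambda>z w. [:1, -1:] ^ height r x z * ([:-1, 1:] ^ height r z w * G_poly P r w y)"
  have upper: "ivl r z y = {w \<in> ?I. (z, w) \<in> r}" if "z \<in> ?I" for z
    using that by (auto simp: mem_ivl_iff intro: rel_trans)
  have lower: "ivl r x w = {z \<in> ?I. (z, w) \<in> r}" if "w \<in> ?I" for w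
    using that by (auto simp: mem_ivl_iff intro: rel_trans)
  have "(\<Sum>z\<in>?I. [:1, -1:] ^ height r x z * F_poly z y)
        = (\<Sum>z\<in>?I. \<Sum>w\<in>?I. if (z, w) \<in> r then ?K z w else 0)"
    unfolding F_poly_def sum_distrib_left
    by (rule sum.cong) (simp_all add: upper sum.inter_filter[OF finite_ivl])
  also have "\<dots> = (\<Sum>w\<in>?I. \<Sum>z\<in>?I. if (z, w) \<in> r then ?K z w else 0)"
    by (rule sum.swap)
  also have "\<dots> = (\<Sum>w\<in>?I. (\<Sum>z\<in>ivl r x w. [:1, -1:] ^ height r x z * [:-1, 1:] ^ height r z w)
                        * G_poly P r w y)"
    unfolding sum_distrib_right
    by (rule sum.cong) (simp_all add: lower sum.inter_filter[OF finite_ivl] mult.assoc)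
  also have "\<dots> = (\<Sum>w\<in>?I. if x = w then G_poly P r w y else 0)"
    by (rule sum.cong) (simp_all add: one_minus_t_t_minus_one_inverse mem_ivl_iff)
  also have "\<dots> = G_poly P r x y"
    using left_mem_ivl[OF xy] finite_ivl by (simp add: sum.delta)
  finally show ?thesis .
qed

lemma F_poly_eq_reverse_G_poly:
  assumes "(x, y) \<in> r"
  shows "F_poly x y = reverse_at (height r x y) (G_poly P r x y)"
  using assms
proof (induction rule: height_induct)
  case (less x y)
  show ?case
  proof (cases "x = y")
    case True
    then show ?thesis using less.hyps rel_carrier F_poly_same G_poly_same height_same by simp
  next
    case False
    define e where "e = height r x y"
    define D where "D = (\<Sum>z\<in>ivl r x y - {x}. [:-1, 1:] ^ height r x z * G_poly P r z y)"
    have lower_half: "G_poly P r x y = tau_half e (- D)"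
      using G_poly_unfold[OF less.hyps] height_pos[OF less.hyps False] one_minus_t_times_H_poly
      unfolding e_def D_def by simp
    have "reverse_at e D = (\<Sum>z\<in>ivl r x y - {x}. [:1, -1:] ^ height r x z * F_poly z y)"
      unfolding D_def reverse_at_sum
    proof (rule sum.cong)
      fix z assume z: "z \<in> ivl r x y - {x}"
      then have xz: "(x, z) \<in> r" and zy: "(z, y) \<in> r" by (auto simp: mem_ivl_iff)
      have "e = height r x z + height r z y"
        unfolding e_def using height_additive[OF xz zy] by simp
      moreover have "F_poly z y = reverse_at (height r z y) (G_poly P r z y)"
        using z less.IH[OF zy height_less_left[OF xz zy]] by simp
      ultimately show "reverse_at e ([:-1, 1:] ^ height r x z * G_poly P r z y)
                       = [:1, -1:] ^ height r x z * F_poly z y"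
        using reverse_at_mult[OF _ degree_G_poly_le[OF zy], of "[:-1, 1:] ^ height r x z"]
        by (simp add: degree_power_eq reverse_at_t_minus_1_power)
    qed simp
    also have "\<dots> = G_poly P r x y - F_poly x y"
      using F_poly_inversion[OF less.hyps]
      unfolding sum.remove[OF finite_ivl left_mem_ivl[OF less.hyps]] by (simp add: height_same)
    also have "\<dots> = - D"
      using F_poly_split[OF less.hyps] unfolding D_def by simp
    finally have "reverse_at e D = - D" .
    then have "reverse_at e (G_poly P r x y) = G_poly P r x y + D"
      unfolding lower_half by (rule reverse_at_tau_half)
    then show ?thesis
      using F_poly_split[OF less.hyps] unfolding e_def D_def by simp
  qed
qed

lemma poly_B_poly_1:
  assumes "(x, y) \<in> r"
  shows "poly (B_poly P r x y) 1 = [:1, -1:] ^ height r x y"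
  using assms
proof (induction rule: height_induct)
  case (less x y)
  show ?case
  proof (cases "x = y")
    case True
    then show ?thesis using less.hyps rel_carrier B_poly_same height_same by simp
  next
    case False
    have "(\<Sum>z\<in>ivl r x y - {y}. poly (B_poly P r x z) 1
             * poly (homog (height r x y - height r x z) (G_poly P r z y)) 1)
          = (\<Sum>z\<in>ivl r x y - {y}. [:1, -1:] ^ height r x z * F_poly z y)"
    proof (rule sum.cong)
      fix z assume z: "z \<in> ivl r x y - {y}"
      then have xz: "(x, z) \<in> r" and zy: "(z, y) \<in> r" by (auto simp: mem_ivl_iff)
      have "height r x y - height r x z = height r z y"
        using height_additive[OF xz zy] by simp
      then show "poly (B_poly P r x z) 1 * poly (homog (height r x y - height r x z) (G_poly P r z y)) 1
                 = [:1, -1:] ^ height r x z * F_poly z y"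
        using less.IH[OF xz height_less_right[OF xz zy]] z
        by (simp add: poly_homog_1[OF degree_G_poly_le[OF zy]] F_poly_eq_reverse_G_poly[OF zy])
    qed simp
    moreover have "G_poly P r x y
        = [:1, -1:] ^ height r x y + (\<Sum>z\<in>ivl r x y - {y}. [:1, -1:] ^ height r x z * F_poly z y)"
      using F_poly_inversion[OF less.hyps] rel_carrier[OF less.hyps]
      unfolding sum.remove[OF finite_ivl right_mem_ivl[OF less.hyps]] by (simp add: F_poly_same)
    ultimately show ?thesis
      using B_poly_unfold[OF less.hyps] False less.hyps
      by (simp add: height_eq_0_iff poly_at_uv_1 poly_sum)
  qed
qed

lemma eval_inner_1_B_poly:
  assumes "(x, y) \<in> r" "x \<noteq> y"
  shows "eval_inner 1 (B_poly P r x y) = 0"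
  using assms
proof (induction rule: height_induct)
  case (less x y)
  have x_mem: "x \<in> ivl r x y - {y}" using left_mem_ivl[OF less.hyps] less.prems by simp
  have "(\<Sum>z\<in>ivl r x y - {y} - {x}. eval_inner 1 (B_poly P r x z) * G_poly P r z y) = 0"
  proof (rule sum.neutral, rule ballI)
    fix z assume z: "z \<in> ivl r x y - {y} - {x}"
    then have xz: "(x, z) \<in> r" and zy: "(z, y) \<in> r" and "x \<noteq> z" "z \<noteq> y"
      by (auto simp: mem_ivl_iff)
    then show "eval_inner 1 (B_poly P r x z) * G_poly P r z y = 0"
      using less.IH[OF xz height_less_right[OF xz zy]] by simp
  qed
  then have "(\<Sum>z\<in>ivl r x y - {y}. eval_inner 1 (B_poly P r x z) * G_poly P r z y) = G_poly P r x y"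
    using rel_carrier[OF less.hyps]
    unfolding sum.remove[OF finite_Diff[OF finite_ivl] x_mem] by (simp add: B_poly_same)
  then show ?case
    using B_poly_unfold[OF less.hyps] less.prems less.hyps
    by (simp add: height_eq_0_iff eval_inner_diff eval_inner_sum eval_inner_mult
        eval_inner_1_at_uv eval_inner_1_homog)
qed

lemma degree_B_poly:
  assumes "(x, y) \<in> r" "x \<noteq> y"
  shows "2 * degree (B_poly P r x y) < height r x y"
  using assms
proof (induction rule: height_induct)
  case (less x y)
  define b where "b = (height r x y - 1) div 2"
  have bound: "k \<le> b" if "2 * k < height r x y" for k
    using that unfolding b_def by presburger
  have "degree (at_uv (G_poly P r x y)) \<le> b"
    using degree_at_uv bound[OF degree_G_poly[OF less.hyps less.prems]] by (rule order_trans)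
  moreover have "degree (\<Sum>z\<in>ivl r x y - {y}.
      B_poly P r x z * homog (height r x y - height r x z) (G_poly P r z y)) \<le> b"
  proof (rule degree_sum_le)
    fix z assume z: "z \<in> ivl r x y - {y}"
    then have xz: "(x, z) \<in> r" and zy: "(z, y) \<in> r" and "z \<noteq> y" by (auto simp: mem_ivl_iff)
    have "2 * degree (B_poly P r x z) \<le> height r x z"
      using less.IH[OF xz height_less_right[OF xz zy \<open>z \<noteq> y\<close>]] B_poly_same rel_carrier[OF xz]
      by (cases "x = z") fastforce+
    moreover have "2 * degree (G_poly P r z y) < height r z y"
      using degree_G_poly[OF zy \<open>z \<noteq> y\<close>] .
    ultimately have "2 * degree (B_poly P r x z) + 2 * degree (G_poly P r z y) < height r x y"
      using height_additive[OF xz zy] by linarith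
    then have "degree (B_poly P r x z) + degree (G_poly P r z y) \<le> b"
      by (intro bound) (simp add: distrib_left)
    moreover have "degree (B_poly P r x z * homog (height r x y - height r x z) (G_poly P r z y))
                   \<le> degree (B_poly P r x z) + degree (G_poly P r z y)"
      using degree_mult_le degree_homog add_le_mono order_trans by blast
    ultimately show "degree (B_poly P r x z * homog (height r x y - height r x z) (G_poly P r z y)) \<le> b"
      by linarith
  qed (simp add: finite_ivl)
  ultimately have "degree (B_poly P r x y) \<le> b"
    using B_poly_unfold[OF less.hyps] less.prems less.hyps degree_diff_le
    by (simp add: height_eq_0_iff)
  then show ?case
    using height_pos[OF less.hyps less.prems] unfolding b_def by linarith
qed

end

theorem proposition2p10:
  fixes P :: "'a set" and r :: "'a rel" and zero one :: 'a and d :: nat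
  assumes "eulerian P r zero one d" and "d > 0"
  shows "poly (B_poly P r zero one) 1 = [:1, -1:] ^ d
         \<and> map_poly (\<lambda>c. poly c 1) (B_poly P r zero one) = 0
         \<and> 2 * degree (B_poly P r zero one) < d"
proof -
  interpret eulerian_poset P r zero one d
    using assms(1) by (rule eulerian_poset_if_eulerian)
  have zero_one: "(zero, one) \<in> r"
    using zero_rel one_in_carrier by blast
  have height: "height r zero one = d"
    using height_through[OF zero_one] height_same by simp
  with \<open>d > 0\<close> have "zero \<noteq> one"
    using height_same by auto
  show ?thesis
    using poly_B_poly_1[OF zero_one] eval_inner_1_B_poly[OF zero_one \<open>zero \<noteq> one\<close>]
      degree_B_poly[OF zero_one \<open>zero \<noteq> one\<close>]
    unfolding height eval_inner_def by simp
qed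

end
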